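(* Let $q$ be a prime power and $n\geq 3$. Let $\hat{C}$ be an $(n,q^{n-2},3)_q$ code and $\hat{D}$ an $(n-1,q^{n-3},3)_q$ code, both over $\mathbb{F}_q$. Let $C$ be a code equivalent to $\hat{C}$ such that $s(C,1,0)=\hat{D}$. Then there exist an element $g'\in G_n$ that permutes the values $\mathbb{F}_q\setminus\{0\}$ in the first coordinate (fixing $0$ there) and leaves all coordinates and all other symbol positions unchanged, a coordinate-value pair $(i,v)\in[n]\times\mathbb{F}_q$, and an element $g\in\mathrm{Iso}(s(h_{i,v}\hat{C},1,0),\hat{D})$ such that $C=g'\,e(g,1)\,h_{i,v}\,\hat{C}$.
   Context: $[m]=\{1,\dots,m\}$. An $(n,M,d)_q$ code is a subset of $\mathbb{F}_q^n$ with $M$ elements and minimum Hamming distance $d$. $G_n$ is the group of all pairs $g=(\pi;\sigma_1,\dots,\sigma_n)$ with $\pi$ a permutation of $[n]$ and each $\sigma_i$ a permutation of $\mathbb{F}_q$, acting on $\mathbb{F}_q^n$ by $(gc)_{\pi(i)}=\sigma_{\pi(i)}(c_i)$ for all $i\in[n]$; it acts on codes elementwise. Codes $C,C'$ are equivalent if $C=gC'$ for some $g\in G_n$, and $\mathrm{Iso}(C',C)=\{g\in G_n: gC'=C\}$. Shortening: $s(C,i,v)=\{(c_1,\dots,c_{i-1},c_{i+1},\dots,c_n): c\in C,\ c_i=v\}$. For $g\in G_{n-1}$, $e(g,1)\in G_n$ is the element that fixes coordinate $1$ with the identity permutation of its symbols and acts as $g$ on coordinates $2,\dots,n$ (i.e.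 $e(gC,1,v)=e(g,1)e(C,1,v)$ for all codes $C$ of length $n-1$ and all $v$, where $e(C,1,v)=\{(v,c_1,\dots,c_{n-1}):c\in C\}$). For $i\in[n]$ and $v\in\mathbb{F}_q$, $h_{i,v}\in G_n$ is the element that applies the cyclic permutation $(1\,2\,\cdots\,i)$ to the coordinates and then swaps the values $v$ and $0$ in the first coordinate. *)

theory Defs
  imports "HOL-Combinatorics.Permutations"
begin

text \<open>Words of length n over the alphabet 'a (the field F_q) are lists of length n;
  coordinate k of the paper (k in [n]) is list index k-1.\<close>

definition hamming :: "'a list \<Rightarrow> 'a list \<Rightarrow> nat" where
  "hamming x y = card {i. i < length x \<and> x ! i \<noteq> y ! i}"

definition min_dist :: "'a list set \<Rightarrow> nat" where
  "min_dist C = Min {hamming x y | x y. x \<in> C \<and> y \<in> C \<and> x \<noteq> y}"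

definition is_code :: "nat \<Rightarrow> nat \<Rightarrow> nat \<Rightarrow> 'a list set \<Rightarrow> bool" where
  "is_code n M d C \<longleftrightarrow> C \<subseteq> {c. length c = n} \<and> card C = M \<and> min_dist C = d"

text \<open>Group elements (pi; sigma_1..sigma_n), 0-indexed coordinates.\<close>
type_synonym 'a gelem = "(nat \<Rightarrow> nat) \<times> (nat \<Rightarrow> 'a \<Rightarrow> 'a)"

definition Gn :: "nat \<Rightarrow> 'a gelem set" where
  "Gn n = {(\<pi>, \<sigma>). \<pi> permutes {..<n} \<and> (\<forall>i<n. bij (\<sigma> i))}"

text \<open>(g c)_{pi(i)} = sigma_{pi(i)}(c_i), i.e. (g c)_j = sigma_j (c_{pi^{-1} j}).\<close>
definition act_word :: "'a gelem \<Rightarrow> 'a list \<Rightarrow> 'a list" where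
  "act_word g c = map (\<lambda>j. snd g j (c ! inv (fst g) j)) [0..<length c]"

definition act :: "'a gelem \<Rightarrow> 'a list set \<Rightarrow> 'a list set" where
  "act g C = act_word g ` C"

definition equivalent :: "nat \<Rightarrow> 'a list set \<Rightarrow> 'a list set \<Rightarrow> bool" where
  "equivalent n C C' \<longleftrightarrow> (\<exists>g \<in> Gn n. C = act g C')"

definition Iso :: "nat \<Rightarrow> 'a list set \<Rightarrow> 'a list set \<Rightarrow> 'a gelem set" where
  "Iso n C' C = {g \<in> Gn n. act g C' = C}"

text \<open>Shortening s(C,i,v), with i a 1-based coordinate.\<close>
definition shorten :: "'a list set \<Rightarrow> nat \<Rightarrow> 'a \<Rightarrow> 'a list set" where
  "shorten C i v = {take (i - 1) c @ drop i c | c. c \<in> C \<and> c ! (i - 1) = v}"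

text \<open>e(g,1): fix coordinate 1 (identity on symbols), act as g on coordinates 2..n.\<close>
definition ext1 :: "'a gelem \<Rightarrow> 'a gelem" where
  "ext1 g = ((\<lambda>k. case k of 0 \<Rightarrow> 0 | Suc k' \<Rightarrow> Suc (fst g k')),
             (\<lambda>k. case k of 0 \<Rightarrow> id | Suc k' \<Rightarrow> snd g k'))"

text \<open>h_{i,v}: cyclic coordinate permutation (1 2 ... i), then swap values v and 0
  in the first coordinate (i is 1-based).\<close>
definition hiv :: "nat \<Rightarrow> 'a::zero \<Rightarrow> 'a gelem" where
  "hiv i v = ((\<lambda>k. if k < i - 1 then Suc k else if k = i - 1 then 0 else k),
              (\<lambda>k. if k = 0 then (\<lambda>x. if x = v then 0 else if x = 0 then v else x) else id))"

end

theory Submission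
  imports Defs
begin

text \<open>Every element \<open>(\<pi>, \<sigma>)\<close> of \<open>G_n\<close> factors as \<open>g' e(g,1) h_{i,v}\<close>: choose \<open>i\<close> with
  \<open>\<pi>(i) = 1\<close> and \<open>v\<close> with \<open>\<sigma>_1(v) = 0\<close>, so that \<open>h_{i,v}\<close> brings coordinate \<open>i\<close> to the front
  with \<open>v\<close> turned into \<open>0\<close>. The remaining factor fixes the first coordinate, hence is
  \<open>e(g,1)\<close> followed by a permutation \<open>g'\<close> of the first-coordinate symbols fixing \<open>0\<close>.
  Shortening at \<open>(1,0)\<close> turns \<open>g' e(g,1)\<close> into \<open>g\<close>, so \<open>g\<close> maps \<open>s(h_{i,v} Chat,1,0)\<close> onto
  \<open>s(C,1,0)\<close>.\<close>

lemma nth_act_word: "j < length c \<Longrightarrow> act_word g c ! j = snd g j (c ! inv (fst g) j)"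
  by (simp add: act_word_def)

lemma length_act_word [simp]: "length (act_word g c) = length c"
  by (simp add: act_word_def)

definition gmult :: "'a gelem \<Rightarrow> 'a gelem \<Rightarrow> 'a gelem" where
  "gmult g h = (fst g \<circ> fst h, \<lambda>j. snd g j \<circ> snd h (inv (fst g) j))"

lemma act_word_gmult:
  assumes "fst g permutes {..<length c}" and "bij (fst h)"
  shows "act_word (gmult g h) c = act_word g (act_word h c)"
proof (rule nth_equalityI)
  fix j assume "j < length (act_word (gmult g h) c)"
  then have "inv (fst g) j < length c"
    using permutes_in_image[OF permutes_inv[OF assms(1)]] by simp
  then show "act_word (gmult g h) c ! j = act_word g (act_word h c) ! j"
    using \<open>j < _\<close> by (simp add: nth_act_word gmult_def o_inv_distrib permutes_bij[OF assms(1)] assms(2))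
qed simp

lemma act_gmult:
  assumes "\<forall>c\<in>X. length c = n" and "fst g permutes {..<n}" and "bij (fst h)"
  shows "act (gmult g h) X = act g (act h X)"
  using assms unfolding act_def image_image by (auto simp: act_word_gmult intro!: image_cong)

lemma permutes_eq_0_iff:
  assumes "p permutes S" and "p 0 = 0"
  shows "p k = 0 \<longleftrightarrow> k = 0"
  using inj_eq[OF permutes_inj[OF assms(1)], of k 0] assms(2) by simp

lemma case_nat_shift_down_eq:
  assumes "p permutes S" and "p 0 = 0"
  shows "(\<lambda>k. case k of 0 \<Rightarrow> 0 | Suc k' \<Rightarrow> Suc (p (Suc k') - 1)) = p"
proof
  fix k show "(case k of 0 \<Rightarrow> 0 | Suc k' \<Rightarrow> Suc (p (Suc k') - 1)) = p k"
    using permutes_eq_0_iff[OF assms, of k] by (cases k) (simp_all add: assms(2))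
qed

lemma permutes_shift_down:
  assumes "p permutes {..<n}" and "p 0 = 0"
  shows "(\<lambda>m. p (Suc m) - 1) permutes {..<n - 1}"
proof (rule bij_imp_permutes)
  let ?q = "\<lambda>m. p (Suc m) - 1" and ?q' = "\<lambda>m. inv p (Suc m) - 1"
  have inv_p: "inv p permutes {..<n}" "inv p 0 = 0"
    using assms permutes_inv permutes_inv_eq by metis+
  have pos: "0 < p (Suc m)" "0 < inv p (Suc m)" for m
    using permutes_eq_0_iff[OF assms, of "Suc m"]
      permutes_eq_0_iff[OF inv_p, of "Suc m"] by simp_all
  have inverses: "p (inv p k) = k" "inv p (p k) = k" for k
    using permutes_inverses[OF assms(1)] by simp_all
  have bounded: "p k < n \<longleftrightarrow> k < n" "inv p k < n \<longleftrightarrow> k < n" for k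
    using permutes_in_image[OF assms(1)] permutes_in_image[OF inv_p(1)] by simp_all
  show "bij_betw ?q {..<n - 1} {..<n - 1}"
    by (rule bij_betw_byWitness[where f' = ?q'])
      (use pos inverses bounded in \<open>auto simp: less_diff_conv\<close>)
  show "m \<notin> {..<n - 1} \<Longrightarrow> ?q m = m" for m
    using permutes_not_in[OF assms(1), of "Suc m"] by simp
qed

lemma inv_fst_ext1:
  assumes "bij (fst g)"
  shows "inv (fst (ext1 g)) = (\<lambda>k. case k of 0 \<Rightarrow> 0 | Suc k' \<Rightarrow> Suc (inv (fst g) k'))"
  by (rule inv_equality)
    (auto simp: ext1_def bij_is_inj[OF assms] bij_is_surj[OF assms] surj_f_inv_f split: nat.split)

lemma snd_ext1 [simp]: "snd (ext1 g) 0 = id" "snd (ext1 g) (Suc k) = snd g k"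
  by (simp_all add: ext1_def)

lemma act_word_ext1_Cons:
  assumes "bij (fst g)"
  shows "act_word (ext1 g) (a # w) = a # act_word g w"
  by (rule nth_equalityI)
    (auto simp: nth_act_word inv_fst_ext1[OF assms] nth_Cons split: nat.split)

lemma shorten_1_eq:
  assumes "[] \<notin> X"
  shows "shorten X 1 v = tl ` {c \<in> X. hd c = v}"
proof -
  have "c ! 0 = hd c" "drop (Suc 0) c = tl c" if "c \<in> X" for c
    using that assms by (cases c; simp)+
  then show ?thesis by (force simp: shorten_def)
qed

lemma act_word_first_coord_Cons:
  "act_word (id, \<lambda>k. if k = 0 then t else id) (a # w) = t a # w"
  by (rule nth_equalityI) (auto simp: nth_act_word nth_Cons split: nat.split)

lemma shorten_act_first_coord_ext1:
  assumes "[] \<notin> X" and "inj t" and "t 0 = 0" and "bij (fst g)"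
  shows "shorten (act (id, \<lambda>k. if k = 0 then t else id) (act (ext1 g) X)) 1 0
           = act g (shorten X 1 0)"
proof -
  have t_eq_0: "t x = 0 \<longleftrightarrow> x = 0" for x
    using inj_eq[OF assms(2), of x 0] assms(3) by simp
  have image_form: "act (id, \<lambda>k. if k = 0 then t else id) (act (ext1 g) X)
          = (\<lambda>c. t (hd c) # act_word g (tl c)) ` X" (is "?A = ?F ` X")
    unfolding act_def image_image
  proof (rule image_cong)
    fix c assume "c \<in> X"
    then obtain a w where "c = a # w" using assms(1) by (cases c) auto
    then show "act_word (id, \<lambda>k. if k = 0 then t else id) (act_word (ext1 g) c)
                 = t (hd c) # act_word g (tl c)"
      by (simp add: act_word_ext1_Cons[OF assms(4)] act_word_first_coord_Cons)
  qed simp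
  have "[] \<notin> ?F ` X" by auto
  then have "shorten ?A 1 0 = tl ` {c \<in> ?F ` X. hd c = 0}"
    unfolding image_form by (rule shorten_1_eq)
  also have "\<dots> = act_word g ` tl ` {c \<in> X. hd c = 0}"
    by (auto simp: t_eq_0 assms(3) intro!: rev_image_eqI)
  also have "\<dots> = act g (shorten X 1 0)"
    unfolding shorten_1_eq[OF assms(1)] act_def ..
  finally show ?thesis .
qed

lemma fst_hiv_permutes:
  assumes "i \<in> {1..n}"
  shows "fst (hiv i v) permutes {..<n}"
proof (rule bij_imp_permutes)
  show "bij_betw (fst (hiv i v)) {..<n} {..<n}"
    by (rule bij_betw_byWitness[where f' = "\<lambda>k. if k = 0 then i - 1 else if k < i then k - 1 else k"])
      (use assms in \<open>auto simp: hiv_def\<close>)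
  show "k \<notin> {..<n} \<Longrightarrow> fst (hiv i v) k = k" for k
    using assms by (auto simp: hiv_def)
qed

lemma Gn_factor_hiv:
  assumes "(\<pi>, \<sigma>) \<in> Gn n" and "0 < n"
  obtains \<tau> g i v where "bij \<tau>" "\<tau> 0 = 0" "g \<in> Gn (n - 1)" "i \<in> {1..n}"
    "(\<pi>, \<sigma>) = gmult (id, \<lambda>k. if k = 0 then \<tau> else id) (gmult (ext1 g) (hiv i v))"
    "fst (ext1 g) permutes {..<n}"
proof -
  have \<pi>: "\<pi> permutes {..<n}" and \<sigma>: "\<And>k. k < n \<Longrightarrow> bij (\<sigma> k)"
    using assms(1) by (auto simp: Gn_def)
  define i where "i = Suc (inv \<pi> 0)"
  define v where "v = inv (\<sigma> 0) 0"
  define \<rho> where "\<rho> = fst (hiv i v)"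
  define swap where "swap = snd (hiv i v) 0"
  define p where "p = \<pi> \<circ> inv \<rho>"
  define g where "g = (\<lambda>m. p (Suc m) - 1, \<lambda>m. \<sigma> (Suc m))"
  have i: "i \<in> {1..n}"
    using permutes_in_image[OF permutes_inv[OF \<pi>], of 0] assms(2) by (simp add: i_def)
  have \<rho>: "\<rho> permutes {..<n}"
    using fst_hiv_permutes[OF i] by (simp add: \<rho>_def)
  moreover have "\<rho> (inv \<pi> 0) = 0"
    by (simp add: \<rho>_def i_def hiv_def)
  ultimately have \<rho>_0: "inv \<rho> 0 = inv \<pi> 0"
    using permutes_inverses(2) by metis
  have p: "p permutes {..<n}" "p 0 = 0"
    using permutes_compose[OF permutes_inv[OF \<rho>] \<pi>] permutes_inverses(1)[OF \<pi>]
    by (simp_all add: p_def \<rho>_0)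
  have ext1_g: "fst (ext1 g) = p"
    unfolding ext1_def g_def fst_conv by (rule case_nat_shift_down_eq[OF p])
  have g: "g \<in> Gn (n - 1)"
    using permutes_shift_down[OF p] \<sigma> by (simp add: Gn_def g_def)
  have swap: "swap \<circ> swap = id" "swap 0 = v"
    by (auto simp: swap_def hiv_def)
  have \<sigma>0: "\<sigma> 0 v = 0" "bij (\<sigma> 0)"
    using \<sigma> assms(2) by (auto simp: v_def bij_is_surj surj_f_inv_f)
  have "bij (\<sigma> 0 \<circ> swap)"
    using \<sigma>0(2) o_bij[OF swap(1) swap(1)] by (rule bij_comp[rotated])
  moreover have "(\<pi>, \<sigma>) = gmult (id, \<lambda>k. if k = 0 then \<sigma> 0 \<circ> swap else id) (gmult (ext1 g) (hiv i v))"
  proof -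
    have inv_p_0: "inv p 0 = 0"
      using permutes_inv_eq[OF p(1)] p(2) by simp
    have \<sigma>_factor: "\<sigma> k = (if k = 0 then \<sigma> 0 \<circ> swap else id) \<circ> (snd (ext1 g) k \<circ> snd (hiv i v) (inv p k))"
      for k
    proof (cases k)
      case 0
      then show ?thesis using swap(1) by (simp add: swap_def inv_p_0 comp_assoc)
    next
      case (Suc m)
      then have "inv p k \<noteq> 0"
        using permutes_eq_0_iff[OF permutes_inv[OF p(1)] inv_p_0] by simp
      then show ?thesis using Suc by (simp add: hiv_def g_def)
    qed
    have "\<pi> = p \<circ> \<rho>"
      using permutes_inv_o(2)[OF \<rho>] by (simp add: p_def comp_assoc)
    then show ?thesis
      unfolding gmult_def ext1_g by (simp add: \<rho>_def) (rule ext, rule \<sigma>_factor)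
  qed
  ultimately show ?thesis
    using that i g p(1) swap(2) \<sigma>0(1) ext1_g by simp
qed

theorem theorem5:
  fixes Chat C :: "'a::{finite,field} list set"
    and Dhat :: "'a list set"
    and n q :: nat
  assumes "q = card (UNIV :: 'a set)"
    and "n \<ge> 3"
    and "is_code n (q ^ (n - 2)) 3 Chat"
    and "is_code (n - 1) (q ^ (n - 3)) 3 Dhat"
    and "equivalent n C Chat"
    and "shorten C 1 0 = Dhat"
  shows "\<exists>g' i v g.
           g' \<in> Gn n \<and> fst g' = id \<and> snd g' 0 0 = 0 \<and> (\<forall>j\<in>{1..<n}. snd g' j = id) \<and>
           i \<in> {1..n} \<and>
           g \<in> Iso (n - 1) (shorten (act (hiv i v) Chat) 1 0) Dhat \<and>
           C = act g' (act (ext1 g) (act (hiv i v) Chat))"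
proof -
  obtain \<pi> \<sigma> where "(\<pi>, \<sigma>) \<in> Gn n" and C: "C = act (\<pi>, \<sigma>) Chat"
    using assms(5) by (auto simp: equivalent_def)
  then obtain \<tau> g i v where \<tau>: "bij \<tau>" "\<tau> 0 = 0" and g: "g \<in> Gn (n - 1)" and i: "i \<in> {1..n}"
    and factor: "(\<pi>, \<sigma>) = gmult (id, \<lambda>k. if k = 0 then \<tau> else id) (gmult (ext1 g) (hiv i v))"
    and ext1_g: "fst (ext1 g) permutes {..<n}"
    using assms(2) by (elim Gn_factor_hiv) auto
  define g' :: "'a gelem" where "g' = (id, \<lambda>k. if k = 0 then \<tau> else id)"
  have lengths: "\<forall>c\<in>Chat. length c = n"
    using assms(3) by (auto simp: is_code_def)
  have "bij (fst (gmult (ext1 g) (hiv i v)))"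
    using factor \<open>(\<pi>, \<sigma>) \<in> Gn n\<close> by (auto simp: Gn_def gmult_def permutes_bij)
  then have "C = act g' (act (gmult (ext1 g) (hiv i v)) Chat)"
    unfolding C factor g'_def by (intro act_gmult[OF lengths]) (simp_all add: permutes_id)
  also have "\<dots> = act g' (act (ext1 g) (act (hiv i v) Chat))"
    using act_gmult[OF lengths ext1_g permutes_bij[OF fst_hiv_permutes[OF i]]] by simp
  finally have C_factor: "C = act g' (act (ext1 g) (act (hiv i v) Chat))" .
  have "[] \<notin> act (hiv i v) Chat"
    using lengths assms(2) by (fastforce simp: act_def dest: arg_cong[where f = length])
  then have "shorten C 1 0 = act g (shorten (act (hiv i v) Chat) 1 0)"
    unfolding C_factor g'_def
    by (rule shorten_act_first_coord_ext1) (use \<tau> g in \<open>auto simp: Gn_def bij_is_inj permutes_bij\<close>)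
  then show ?thesis
    using \<tau> g i C_factor assms(6)
    by (intro exI[of _ g'] exI[of _ i] exI[of _ v] exI[of _ g]) (auto simp: g'_def Gn_def Iso_def permutes_id)
qed

end
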